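(* Let $z_1,\ldots,z_N$ be i.i.d. uniform on the unit circle and $P(z)=\prod_{i=1}^N(z-z_i)$. Let $\gamma=\log\big(\cos(\pi/8)/\sin(\pi/8)\big)$. Then for every $\epsilon\in(0,1)$ and all sufficiently large $N$, $$\mathbb{P}\Big(\max_{|z|=1}|P(z)|^2\ge\exp\big(\gamma\sqrt\pi\,\epsilon\sqrt N/2\big)\Big)\ge1-\epsilon.$$ *)

theory Defs
  imports "HOL-Probability.Probability"
begin

definition unif_circle :: "complex measure" where
  "unif_circle = distr (uniform_measure lborel {0..<2*pi}) borel cis"

definition circle_points :: "nat \<Rightarrow> (nat \<Rightarrow> complex) measure" where
  "circle_points N = PiM {..<N} (\<lambda>_. unif_circle)"

definition rpoly :: "nat \<Rightarrow> (nat \<Rightarrow> complex) \<Rightarrow> complex \<Rightarrow> complex" where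
  "rpoly N z w = (\<Prod>i<N. w - z i)"

definition gamma_const :: real where
  "gamma_const = ln (cos (pi/8) / sin (pi/8))"

end

theory Submission
  imports Defs "HOL-Library.Real_Mod" "HOL-Complex_Analysis.Conformal_Mappings"
begin

text \<open>
  Write \<open>S = \<Sum>\<^sub>i<N Re z\<^sub>i\<close> for points \<open>z\<^sub>i\<close> on the unit circle.  The proof has a deterministic
  and a probabilistic half.

  Deterministic half: for every \<open>0 \<le> u < 1\<close> the maximum of \<open>|P(w)|\<^sup>2\<close> over \<open>|w| = 1\<close> is at
  least \<open>exp (u\<^sup>2 |S| - 2)\<close>
  (lemma max_lower_bound).  The reflected polynomial \<open>Q(v) = \<Prod>(1 - v z\<^sub>i)\<close> satisfies
  \<open>|Q(w)| = |P(conj w)|\<close> on the circle, so by the maximum modulus principle \<open>|Q|\<close> inside the disc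
  is bounded by \<open>max |P|\<close>.  We average \<open>ln |Q|\<close> over the m-th roots of unity on the circle of
  radius \<open>u\<^sup>2\<close> with the nonnegative weights \<open>1 \<plusminus> cos(2\<pi>j/m)\<close>.  Expanding
  \<open>ln |1 - y| = - \<Sum> Re(y\<^sup>n)/n\<close>, only frequencies \<open>n \<equiv> 0, \<plusminus>1 (mod m)\<close> survive; the first one
  contributes \<open>m u\<^sup>2 |S|/2\<close> and the others are \<open>O(m u^(m-1))\<close>, negligible for large m.  Some
  root therefore attains at least the average.

  Probabilistic half: the \<open>Re z\<^sub>i\<close> are i.i.d. with mean 0 and variance 1/2, so by the central
  limit theorem \<open>P(|S| < c sqrt N)\<close> tends to the Gaussian mass of an interval, which is at most
  \<open>2c/sqrt \<pi>\<close> because the normal density is at most \<open>1/sqrt(2\<pi>)\<close>.  Finally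
  \<open>\<gamma> = ln (1 + sqrt 2) \<le> 9/10\<close> leaves room to choose \<open>u = 0.99\<close> and \<open>c = 0.95 \<epsilon> sqrt \<pi> / 2\<close>.
\<close>

lemma root_unity_sum:
  assumes m: "m > 0"
  shows "(\<Sum>j<m. cis (2*pi/m) ^ (j*k)) = (if m dvd k then of_nat m else 0)"
proof (cases "m dvd k")
  case True
  then obtain t where k: "k = m * t" by blast
  have "cis (2*pi/m) ^ (j*k) = 1" for j
  proof -
    have "cis (2*pi/m) ^ (j*k) = cis (real (j*k) * (2*pi/m))" by (rule Complex.DeMoivre)
    also have "real (j*k) * (2*pi/m) = 2*pi * real (j*t)" using m by (simp add: k field_simps)
    also have "cis (2*pi * real (j*t)) = 1" by (rule cis_multiple_2pi) (simp add: Ints_of_nat)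
    finally show ?thesis .
  qed
  then show ?thesis using True by simp
next
  case False
  let ?x = "cis (2*pi/m) ^ k"
  have x1: "?x \<noteq> 1"
  proof
    assume "?x = 1"
    then have "cis (real k * (2*pi/m)) = 1" by (simp add: Complex.DeMoivre)
    then obtain n where "real k * (2*pi/m) = of_int n * (2*pi)" by (auto simp: cis_eq_1_iff)
    then have "real k = of_int n * real m" using m by (simp add: field_simps)
    then have "int k = n * int m" by (metis of_int_eq_iff of_int_mult of_int_of_nat_eq)
    then show False using False by (metis dvd_triv_right int_dvd_int_iff)
  qed
  have "?x ^ m = cis (2*pi * real k)"
    using m by (simp add: Complex.DeMoivre power_mult[symmetric] field_simps)
  also have "\<dots> = 1" by (rule cis_multiple_2pi) (simp add: Ints_of_nat)
  finally have xm: "?x ^ m = 1" .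
  have "(\<Sum>j<m. cis (2*pi/m) ^ (j*k)) = (\<Sum>j<m. ?x ^ j)"
    by (simp add: power_mult[symmetric] mult.commute)
  also have "\<dots> = 0" using x1 xm by (simp add: geometric_sum)
  finally show ?thesis using False by simp
qed

lemma cos_root_of_unity:
  assumes m: "m > 0"
  shows "complex_of_real (cos (2*pi*j/m)) = (cis (2*pi/m) ^ j + cis (2*pi/m) ^ (j*(m-1))) / 2"
proof -
  have a: "cis (2*pi/m) ^ j = cis (2*pi*j/m)"
    by (subst Complex.DeMoivre) (simp add: field_simps)
  have "cis (2*pi/m) ^ (j*(m-1)) = cis (real (j*(m-1)) * (2*pi/m))"
    by (rule Complex.DeMoivre)
  also have "real (j*(m-1)) * (2*pi/m) = 2*pi*real j + (- (2*pi*j/m))"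
    using m by (simp add: of_nat_diff field_simps)
  also have "cis \<dots> = cis (2*pi*real j) * cis (- (2*pi*j/m))"
    by (rule cis_mult[symmetric])
  also have "cis (2*pi*real j) = 1" by (rule cis_multiple_2pi) (simp add: Ints_of_nat)
  finally have b: "cis (2*pi/m) ^ (j*(m-1)) = cis (- (2*pi*j/m))" by simp
  show ?thesis unfolding a b by (simp add: complex_eq_iff)
qed

text \<open>The nonnegative weights \<open>1 + s cos(2\<pi>j/m)\<close> on the m-th roots of unity (a discrete
  Fejer-type kernel).  Averaging against them isolates the first Fourier coefficient.\<close>
definition cos_kernel :: "nat \<Rightarrow> real \<Rightarrow> nat \<Rightarrow> real" where
  "cos_kernel m s j = 1 + s * cos (2*pi*real j/real m)"

lemma cos_kernel_nonneg:
  assumes "\<bar>s\<bar> \<le> 1"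
  shows "0 \<le> cos_kernel m s j"
proof -
  have "\<bar>s * cos (2*pi*real j/real m)\<bar> \<le> 1"
    unfolding abs_mult using assms abs_cos_le_one by (intro mult_le_one) auto
  then show ?thesis by (simp add: cos_kernel_def abs_le_iff)
qed

lemma cos_kernel_sum:
  assumes m: "m \<ge> 2"
  shows "(\<Sum>j<m. cos_kernel m s j) = real m"
proof -
  have m0: "m > 0" using m by simp
  have "\<not> m dvd 1" "\<not> m dvd (m-1)" using m by (auto dest: dvd_imp_le)
  then have "(\<Sum>j<m. cis (2*pi/m) ^ (j*1)) = 0" "(\<Sum>j<m. cis (2*pi/m) ^ (j*(m-1))) = 0"
    using root_unity_sum[OF m0, of 1] root_unity_sum[OF m0, of "m-1"] by simp_all
  then have "(\<Sum>j<m. cis (2*pi/m) ^ (j*1) + cis (2*pi/m) ^ (j*(m-1))) / 2 = 0"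
    by (simp only: sum.distrib) simp
  then have "complex_of_real (\<Sum>j<m. cos (2*pi*j/m)) = 0"
    by (simp add: cos_root_of_unity[OF m0] sum_divide_distrib)
  then have "(\<Sum>j<m. cos (2*pi*j/m)) = 0" by (simp only: of_real_eq_0_iff)
  then show ?thesis by (simp add: cos_kernel_def sum.distrib sum_distrib_left[symmetric])
qed

text \<open>The Fourier coefficients of the kernel: only frequencies \<open>n \<equiv> 0, \<plusminus>1 (mod m)\<close> survive.\<close>
definition kernel_coeff :: "nat \<Rightarrow> real \<Rightarrow> nat \<Rightarrow> real" where
  "kernel_coeff m s n = real m * (if m dvd n then 1 else 0)
     + s * m / 2 * ((if m dvd (n+1) then 1 else 0) + (if m dvd (n+(m-1)) then 1 else 0))"

lemma kernel_coeff_eq: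
  assumes m: "m > 0"
  shows "(\<Sum>j<m. complex_of_real (cos_kernel m s j) * cis (2*pi/m) ^ (j*n))
           = complex_of_real (kernel_coeff m s n)"
proof -
  define \<omega> where "\<omega> = cis (2*pi/m)"
  have "complex_of_real (cos_kernel m s j) * \<omega>^(j*n)
          = \<omega>^(j*n) + of_real s / 2 * (\<omega>^(j*(n+1)) + \<omega>^(j*(n+(m-1))))" for j
  proof -
    have a: "complex_of_real (cos_kernel m s j) = 1 + of_real s * (\<omega>^j + \<omega>^(j*(m-1))) / 2"
      by (simp add: cos_kernel_def cos_root_of_unity[OF m] \<omega>_def)
    have b: "\<omega>^(j*(n+1)) = \<omega>^(j*n) * \<omega>^j" "\<omega>^(j*(n+(m-1))) = \<omega>^(j*n) * \<omega>^(j*(m-1))"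
      by (simp_all add: add_mult_distrib2 power_add)
    show ?thesis by (simp only: a b) (simp add: field_simps)
  qed
  then have "(\<Sum>j<m. complex_of_real (cos_kernel m s j) * \<omega>^(j*n))
      = (\<Sum>j<m. \<omega>^(j*n)) + of_real s / 2 * ((\<Sum>j<m. \<omega>^(j*(n+1))) + (\<Sum>j<m. \<omega>^(j*(n+(m-1)))))"
    by (simp only: sum.distrib sum_distrib_left[symmetric])
  then show ?thesis unfolding \<omega>_def root_unity_sum[OF m] kernel_coeff_def by simp
qed

lemma kernel_coeff_one: "m \<ge> 3 \<Longrightarrow> kernel_coeff m s 1 = real m * s / 2"
  by (auto simp: kernel_coeff_def dest: dvd_imp_le)

lemma kernel_coeff_bound: "\<bar>s\<bar> \<le> 1 \<Longrightarrow> \<bar>kernel_coeff m s n\<bar> \<le> 2 * real m"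
  using mult_right_mono[of "\<bar>s\<bar>" 1 "real m"]
  by (auto simp: kernel_coeff_def abs_mult intro!: order.trans[OF abs_triangle_ineq])

text \<open>Between the frequencies 1 and \<open>m - 1\<close> the coefficients vanish: this is what makes the
  kernel average of \<open>ln |1 - \<omega>^j y|\<close> equal to its first Fourier term up to \<open>O(|y|^(m-1))\<close>.\<close>
lemma kernel_coeff_vanish:
  assumes "2 \<le> n" "n + 1 < m"
  shows "kernel_coeff m s n = 0"
proof -
  have "\<not> m dvd n" "\<not> m dvd (n+1)" using assms by (auto dest: dvd_imp_le)
  moreover have "\<not> m dvd (n+(m-1))"
  proof
    assume "m dvd (n+(m-1))"
    then have "m dvd (n+(m-1)) - m" by (simp add: dvd_diff_nat)
    moreover have "(n+(m-1)) - m = n - 1" using assms by simp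
    ultimately show False using assms by (auto dest: dvd_imp_le)
  qed
  ultimately show ?thesis by (simp add: kernel_coeff_def)
qed

lemma ln_norm_one_minus_sums:
  fixes y :: complex
  assumes y: "cmod y < 1"
  shows "(\<lambda>n. - Re (y^n) / real n) sums ln (cmod (1 - y))"
proof -
  have "(\<lambda>n. - ((-(-y))^n) / of_nat n) sums ln (1 + (-y))"
    by (rule Ln_series') (use y in simp)
  from sums_Re[OF this] have "(\<lambda>n. - Re (y^n) / real n) sums Re (ln (1 - y))"
    by simp
  moreover have "1 - y \<noteq> 0" using y by auto
  ultimately show ?thesis by simp
qed

lemma sums_tail_geometric_bound:
  fixes f :: "nat \<Rightarrow> real"
  assumes f: "f sums L" and u: "0 \<le> u" "u < 1" and C: "0 \<le> C"
    and bound: "\<And>n. 2 \<le> n \<Longrightarrow> \<bar>f n\<bar> \<le> C * u^n"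
  shows "\<bar>L - f 0 - f 1\<bar> \<le> C / (1 - u)"
proof -
  have tail: "(\<lambda>i. f (i+2)) sums (L - (f 0 + f 1))"
    using sums_split_initial_segment[OF f, of 2] by (simp add: numeral_2_eq_2)
  have geo: "(\<lambda>i. C * u^i) sums (C / (1 - u))"
    using sums_mult[OF geometric_sums[of u], of C] u by simp
  have dom: "\<bar>f (i+2)\<bar> \<le> C * u^i" for i
  proof -
    have "u^(i+2) \<le> u^i" using u by (intro power_decreasing) auto
    then show ?thesis using bound[of "i+2"] mult_left_mono[OF _ C] by force
  qed
  have sa: "summable (\<lambda>i. \<bar>f (i+2)\<bar>)"
    by (rule summable_comparison_test'[OF sums_summable[OF geo]]) (use dom in auto)
  have "\<bar>L - f 0 - f 1\<bar> = \<bar>\<Sum>i. f (i+2)\<bar>" using tail by (simp add: sums_iff)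
  also have "\<dots> \<le> (\<Sum>i. \<bar>f (i+2)\<bar>)" using summable_norm[of "\<lambda>i. f (i+2)"] sa by simp
  also have "\<dots> \<le> (\<Sum>i. C * u^i)" by (intro suminf_le dom sa sums_summable[OF geo])
  also have "\<dots> = C / (1 - u)" using geo by (simp add: sums_iff)
  finally show ?thesis .
qed

lemma kernel_average_ln_sums:
  fixes y :: complex
  assumes m: "m > 0" and y: "cmod y < 1"
  shows "(\<lambda>n. - kernel_coeff m s n * Re (y^n) / real n)
           sums (\<Sum>j<m. cos_kernel m s j * ln (cmod (1 - cis (2*pi/m) ^ j * y)))"
proof -
  define \<omega> where "\<omega> = cis (2*pi/m)"
  have term_eq: "(\<Sum>j<m. cos_kernel m s j * (- Re ((\<omega>^j * y)^n) / real n))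
                   = - kernel_coeff m s n * Re (y^n) / real n" for n
  proof -
    have "(\<Sum>j<m. cos_kernel m s j * Re ((\<omega>^j * y)^n))
        = Re (\<Sum>j<m. complex_of_real (cos_kernel m s j) * (\<omega>^j * y)^n)"
      by (simp add: Re_sum)
    also have "\<dots> = Re ((\<Sum>j<m. complex_of_real (cos_kernel m s j) * \<omega>^(j*n)) * y^n)"
      by (simp add: sum_distrib_right power_mult_distrib power_mult mult.assoc)
    also have "\<dots> = Re (complex_of_real (kernel_coeff m s n) * y^n)"
      by (simp only: \<omega>_def kernel_coeff_eq[OF m])
    also have "\<dots> = kernel_coeff m s n * Re (y^n)"
      by simp
    finally show ?thesis
      by (simp add: sum_negf sum_divide_distrib[symmetric])
  qed
  have "cmod (\<omega>^j * y) < 1" for j using y by (simp add: \<omega>_def norm_mult norm_power)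
  then have "(\<lambda>n. \<Sum>j<m. cos_kernel m s j * (- Re ((\<omega>^j * y)^n) / real n))
              sums (\<Sum>j<m. cos_kernel m s j * ln (cmod (1 - \<omega>^j * y)))"
    by (intro sums_sum sums_mult ln_norm_one_minus_sums)
  then have "(\<lambda>n. - kernel_coeff m s n * Re (y^n) / real n)
               sums (\<Sum>j<m. cos_kernel m s j * ln (cmod (1 - \<omega>^j * y)))"
    by (simp only: term_eq)
  then show ?thesis by (simp only: \<omega>_def)
qed

text \<open>Key analytic estimate: the kernel average of \<open>ln |1 - \<omega>^j y|\<close> equals \<open>-m s Re(y)/2\<close>
  (its first Fourier term) up to an error \<open>O(m u^(m-1))\<close>, because the kernel coefficients of
  order \<open>2 .. m-2\<close> vanish and the remaining ones are bounded by \<open>2m\<close>.\<close>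
lemma kernel_average_ln:
  fixes y :: complex
  assumes m: "m \<ge> 3" and u: "0 \<le> u" "u < 1" and yu: "cmod y \<le> u^2" and s: "\<bar>s\<bar> \<le> 1"
  shows "\<bar>(\<Sum>j<m. cos_kernel m s j * ln (cmod (1 - cis (2*pi/m) ^ j * y))) + real m * s * Re y / 2\<bar>
          \<le> 2 * m * u^(m-1) / (1 - u)"
proof -
  define t where "t n = - kernel_coeff m s n * Re (y^n) / real n" for n
  have "u\<^sup>2 < 1" using u by (simp add: abs_square_less_1)
  then have y1: "cmod y < 1" using yu by linarith
  have tsum: "t sums (\<Sum>j<m. cos_kernel m s j * ln (cmod (1 - cis (2*pi/m) ^ j * y)))"
    unfolding t_def using m y1 by (intro kernel_average_ln_sums) auto
  have t1: "t 1 = - (real m * s / 2) * Re y" using kernel_coeff_one[OF m, of s] by (simp add: t_def)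
  have tbound: "\<bar>t n\<bar> \<le> 2*m*u^(m-1) * u^n" if n: "2 \<le> n" for n
  proof (cases "n + 1 < m")
    case True then show ?thesis using u by (simp add: t_def kernel_coeff_vanish[OF n])
  next
    case False
    have "\<bar>t n\<bar> = \<bar>kernel_coeff m s n\<bar> * \<bar>Re (y^n)\<bar> / real n"
      by (simp add: t_def abs_mult)
    also have "\<dots> \<le> \<bar>kernel_coeff m s n\<bar> * \<bar>Re (y^n)\<bar>"
      using divide_left_mono[of 1 "real n" "\<bar>kernel_coeff m s n\<bar> * \<bar>Re (y^n)\<bar>"] n by simp
    also have "\<dots> \<le> 2*m * (u^2)^n"
    proof (rule mult_mono)
      show "\<bar>kernel_coeff m s n\<bar> \<le> 2*m" using kernel_coeff_bound[OF s] by simp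
      have "\<bar>Re (y^n)\<bar> \<le> cmod y ^ n" using abs_Re_le_cmod[of "y^n"] by (simp add: norm_power)
      also have "\<dots> \<le> (u^2)^n" by (intro power_mono yu) simp
      finally show "\<bar>Re (y^n)\<bar> \<le> (u^2)^n" .
    qed auto
    also have "(u^2)^n = u^n * u^n" by (simp add: power2_eq_square power_mult_distrib)
    also have "2*m * (u^n * u^n) \<le> 2*m * (u^(m-1) * u^n)"
      using False u by (intro mult_left_mono mult_right_mono power_decreasing) auto
    finally show ?thesis by (simp add: mult.assoc)
  qed
  have "\<bar>(\<Sum>j<m. cos_kernel m s j * ln (cmod (1 - cis (2*pi/m) ^ j * y))) - t 0 - t 1\<bar>
          \<le> 2*m*u^(m-1) / (1 - u)"
    by (rule sums_tail_geometric_bound[OF tsum u]) (use u tbound in auto)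
  then show ?thesis unfolding t1 by (simp add: t_def algebra_simps)
qed

lemma rpoly_norm_bound:
  assumes "cmod w = 1"
  shows "(cmod (rpoly N z w))\<^sup>2 \<le> (\<Prod>i<N. 1 + cmod (z i))\<^sup>2"
proof -
  have "cmod (rpoly N z w) = (\<Prod>i<N. cmod (w - z i))" by (simp add: rpoly_def prod_norm)
  also have "\<dots> \<le> (\<Prod>i<N. 1 + cmod (z i))"
    using norm_triangle_ineq4[of w] assms by (intro prod_mono) auto
  finally show ?thesis by (intro power_mono) auto
qed

lemma bdd_rpoly: "bdd_above ((\<lambda>w. (cmod (rpoly N z w))\<^sup>2) ` {w. cmod w = 1})"
  using rpoly_norm_bound by (intro bdd_aboveI[of _ "(\<Prod>i<N. 1 + cmod (z i))\<^sup>2"]) auto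

text \<open>Maximum modulus principle for the reflected polynomial \<open>Q(v) = \<Prod>(1 - v z\<^sub>i)\<close>: on the
  circle \<open>|Q(w)| = |P(conj w)|\<close>, so inside the closed disc \<open>|Q|\<^sup>2\<close> is bounded by \<open>max |P|\<^sup>2\<close>.\<close>
lemma reflected_poly_le_max:
  assumes z: "\<forall>i<N. cmod (z i) = 1" and v: "cmod v \<le> 1"
  shows "(cmod (\<Prod>i<N. 1 - v * z i))\<^sup>2 \<le> (SUP w\<in>{w. cmod w = 1}. (cmod (rpoly N z w))\<^sup>2)"
    (is "_ \<le> ?S")
proof -
  have upper: "(cmod (rpoly N z w))\<^sup>2 \<le> ?S" if "cmod w = 1" for w
    using that by (intro cSUP_upper bdd_rpoly) simp
  have boundary: "cmod (\<Prod>i<N. 1 - w * z i) \<le> sqrt ?S" if "w \<in> frontier (cball 0 1)" for w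
  proof -
    have w: "cmod w = 1" using that by simp
    have "1 - w * z i = w * (cnj w - z i)" for i
      using w by (simp add: algebra_simps complex_norm_square[symmetric])
    then have "cmod (\<Prod>i<N. 1 - w * z i) = (\<Prod>i<N. cmod w * cmod (cnj w - z i))"
      by (simp add: prod_norm[symmetric] norm_mult)
    also have "\<dots> = cmod (rpoly N z (cnj w))"
      using w by (simp add: rpoly_def prod_norm)
    also have "\<dots> \<le> sqrt ?S"
      using upper[of "cnj w"] w by (simp add: real_le_rsqrt)
    finally show ?thesis .
  qed
  have "cmod (\<Prod>i<N. 1 - v * z i) \<le> sqrt ?S"
    by (rule maximum_modulus_frontier[where S = "cball 0 1"])
      (use v boundary in \<open>auto intro!: holomorphic_intros continuous_intros\<close>)
  moreover have "0 \<le> ?S" using upper[of 1] by (meson order_trans zero_le_power2 norm_one)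
  ultimately show ?thesis by (metis norm_ge_zero power_mono real_sqrt_pow2)
qed

lemma weighted_mean_attained:
  fixes w a :: "nat \<Rightarrow> real"
  assumes m: "0 < m" and w: "\<And>j. j < m \<Longrightarrow> 0 \<le> w j" and wsum: "(\<Sum>j<m. w j) = real m"
  shows "\<exists>j<m. (\<Sum>j<m. w j * a j) \<le> real m * a j"
proof -
  define A where "A = Max (a ` {..<m})"
  have "A \<in> a ` {..<m}" unfolding A_def using m by (intro Max_in) auto
  then obtain j where j: "j < m" "a j = A" by auto
  have "(\<Sum>j<m. w j * a j) \<le> (\<Sum>j<m. w j * A)"
    by (intro sum_mono mult_left_mono w) (auto simp: A_def)
  also have "\<dots> = real m * A" using wsum by (simp add: sum_distrib_right[symmetric])
  finally show ?thesis using j by auto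
qed

lemma kernel_average_ln_reflected:
  fixes N m :: nat and z :: "nat \<Rightarrow> complex" and u s :: real
  assumes z: "\<forall>i<N. cmod (z i) = 1" and u: "0 \<le> u" "u < 1" and m: "m \<ge> 3" and s: "\<bar>s\<bar> \<le> 1"
  shows "real m * u\<^sup>2 * (- s * (\<Sum>i<N. Re (z i))) / 2 - N * (2 * m * u^(m-1) / (1 - u))
     \<le> (\<Sum>j<m. cos_kernel m s j * ln (cmod (\<Prod>i<N. 1 - (of_real (u\<^sup>2) * cis (2*pi/m) ^ j) * z i)))"
proof -
  define \<omega> where "\<omega> = cis (2*pi/m)"
  define B where "B = 2 * m * u^(m-1) / (1 - u)"
  have u2: "u\<^sup>2 < 1" using u by (simp add: power_less_one_iff abs_square_less_1)
  have y: "cmod (of_real (u\<^sup>2) * z i) = u\<^sup>2" if "i < N" for i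
    using z that by (simp add: norm_mult norm_power)
  have ln_prod: "ln (cmod (\<Prod>i<N. 1 - (of_real (u\<^sup>2) * \<omega> ^ j) * z i))
                   = (\<Sum>i<N. ln (cmod (1 - \<omega> ^ j * (of_real (u\<^sup>2) * z i))))" for j
  proof -
    have "cmod (1 - \<omega> ^ j * (of_real (u\<^sup>2) * z i)) \<noteq> 0" if "i < N" for i
      using y[OF that] u2 by (auto simp: \<omega>_def norm_mult norm_power dest: arg_cong[of _ _ cmod])
    moreover have "cmod (\<Prod>i<N. 1 - (of_real (u\<^sup>2) * \<omega> ^ j) * z i)
                     = (\<Prod>i<N. cmod (1 - \<omega> ^ j * (of_real (u\<^sup>2) * z i)))"
      by (simp add: prod_norm mult_ac)
    ultimately show ?thesis using ln_prod[of "{..<N}"] by simp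
  qed
  have each: "- (real m * s * Re (of_real (u\<^sup>2) * z i) / 2) - B
                \<le> (\<Sum>j<m. cos_kernel m s j * ln (cmod (1 - \<omega> ^ j * (of_real (u\<^sup>2) * z i))))"
    if "i < N" for i
    using kernel_average_ln[OF m u _ s, of "of_real (u\<^sup>2) * z i"] y[OF that]
    unfolding \<omega>_def B_def by (simp add: abs_le_iff)
  have "real m * u\<^sup>2 * (- s * (\<Sum>i<N. Re (z i))) / 2 - N * B
          = (\<Sum>i<N. - (real m * s * Re (of_real (u\<^sup>2) * z i) / 2) - B)"
    by (simp add: sum_subtractf sum_distrib_left algebra_simps)
  also have "\<dots> \<le> (\<Sum>i<N. \<Sum>j<m. cos_kernel m s j * ln (cmod (1 - \<omega> ^ j * (of_real (u\<^sup>2) * z i))))"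
    by (intro sum_mono each) simp
  also have "\<dots> = (\<Sum>j<m. cos_kernel m s j * ln (cmod (\<Prod>i<N. 1 - (of_real (u\<^sup>2) * \<omega> ^ j) * z i)))"
    unfolding ln_prod by (simp add: sum_distrib_left sum.swap[of _ "{..<m}"])
  finally show ?thesis by (simp add: \<omega>_def B_def)
qed

lemma exists_large_order:
  assumes u: "0 \<le> u" "u < 1"
  obtains m :: nat where "m \<ge> 3" "real N * (2 * u^(m-1) / (1 - u)) \<le> 1"
proof -
  have "(\<lambda>k. real N * (2 * u^k / (1 - u))) \<longlonglongrightarrow> real N * (2 * 0 / (1 - u))"
    using u by (intro tendsto_intros LIMSEQ_power_zero) auto
  then have "eventually (\<lambda>k. real N * (2 * u^k / (1 - u)) < 1) sequentially"
    by (intro order_tendstoD) auto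
  then obtain k where "k \<ge> 2" "real N * (2 * u^k / (1 - u)) < 1"
    using eventually_conj[OF _ eventually_ge_at_top[of 2]] eventually_sequentially
    by (metis (no_types, lifting) eventually_at_top_linorder nle_le)
  then show ?thesis using that[of "Suc k"] by simp
qed

lemma max_lower_bound:
  assumes z: "\<forall>i<N. cmod (z i) = 1" and u: "0 \<le> u" "u < 1"
  shows "exp (u\<^sup>2 * \<bar>\<Sum>i<N. Re (z i)\<bar> - 2) \<le> (SUP w\<in>{w. cmod w = 1}. (cmod (rpoly N z w))\<^sup>2)"
proof -
  obtain m :: nat where m: "m \<ge> 3" and err: "real N * (2 * u^(m-1) / (1 - u)) \<le> 1"
    using exists_large_order[OF u] by blast
  define S where "S = (\<Sum>i<N. Re (z i))"
  define s :: real where "s = (if S \<ge> 0 then -1 else 1)"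
  have s: "\<bar>s\<bar> \<le> 1" "- s * S = \<bar>S\<bar>" by (auto simp: s_def)
  define Q where "Q j = (\<Prod>i<N. 1 - (of_real (u\<^sup>2) * cis (2*pi/m) ^ j) * z i)" for j
  define a where "a j = ln (cmod (Q j))" for j
  have avg: "real m * u\<^sup>2 * \<bar>S\<bar> / 2 - N * (2 * m * u^(m-1) / (1 - u)) \<le> (\<Sum>j<m. cos_kernel m s j * a j)"
    using kernel_average_ln_reflected[OF z u m s(1)] unfolding a_def Q_def S_def[symmetric] s(2) .
  obtain j where j: "(\<Sum>j<m. cos_kernel m s j * a j) \<le> real m * a j"
    using weighted_mean_attained[of m "cos_kernel m s" a] cos_kernel_nonneg[OF s(1)]
      cos_kernel_sum[of m s] m by auto
  have "u\<^sup>2 * \<bar>S\<bar> / 2 - 1 \<le> a j"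
  proof -
    have "real m * (u\<^sup>2 * \<bar>S\<bar> / 2 - real N * (2 * u^(m-1) / (1 - u))) \<le> real m * a j"
      using avg j by (simp add: algebra_simps)
    then have "u\<^sup>2 * \<bar>S\<bar> / 2 - real N * (2 * u^(m-1) / (1 - u)) \<le> a j"
      by (rule mult_left_le_imp_le) (use m in simp)
    then show ?thesis using err by linarith
  qed
  have v: "cmod (of_real (u\<^sup>2) * cis (2*pi/m) ^ j) \<le> 1"
    using u by (simp add: norm_mult norm_power power_le_one)
  have "Q j \<noteq> 0"
  proof -
    have "u\<^sup>2 < 1" using u by (simp add: abs_square_less_1)
    then have "1 - (of_real (u\<^sup>2) * cis (2*pi/m) ^ j) * z i \<noteq> 0" if "i < N" for i
      using z that by (auto simp: norm_mult norm_power dest: arg_cong[of _ _ cmod])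
    then show ?thesis by (simp add: Q_def)
  qed
  then have exp_a: "exp (2 * a j) = (cmod (Q j))\<^sup>2"
    by (simp add: a_def exp_double)
  have "exp (u\<^sup>2 * \<bar>S\<bar> - 2) \<le> exp (2 * a j)"
    using \<open>u\<^sup>2 * \<bar>S\<bar> / 2 - 1 \<le> a j\<close> by simp
  also have "\<dots> = (cmod (Q j))\<^sup>2" by (rule exp_a)
  also have "\<dots> \<le> (SUP w\<in>{w. cmod w = 1}. (cmod (rpoly N z w))\<^sup>2)"
    unfolding Q_def by (rule reflected_poly_le_max[OF z v])
  finally show ?thesis by (simp add: S_def)
qed

text \<open>A continuous function has the same supremum over the unit circle as over the points of
  rational angle; this countable description is what makes the maximum measurable.\<close>
lemma SUP_circle_rational_angles:
  fixes f :: "complex \<Rightarrow> real"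
  assumes f: "continuous_on UNIV f"
  shows "(SUP w\<in>{w. cmod w = 1}. f w) = (SUP q\<in>\<rat>. f (cis q))"
proof -
  have circle: "{w. cmod w = 1} = sphere 0 1" by auto
  have "bounded (f ` sphere 0 1)"
    by (intro compact_imp_bounded compact_continuous_image continuous_on_subset[OF f]) auto
  then have bdd: "bdd_above (f ` {w. cmod w = 1})" unfolding circle by (rule bounded_imp_bdd_above)
  have bdd_rat: "bdd_above ((\<lambda>q. f (cis q)) ` \<rat>)"
    by (rule bdd_above_mono[OF bdd]) auto
  show ?thesis
  proof (rule antisym)
    show "(SUP w\<in>{w. cmod w = 1}. f w) \<le> (SUP q\<in>\<rat>. f (cis q))"
    proof (rule cSUP_least)
      fix w :: complex assume w: "w \<in> {w. cmod w = 1}"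
      then have "w \<noteq> 0" by auto
      then have "w = cis (Arg w)" using w by (simp add: cis_Arg sgn_div_norm)
      moreover have "f (cis (Arg w)) \<le> (SUP q\<in>\<rat>. f (cis q))"
        by (rule continuous_le_on_closure[of \<rat> "\<lambda>t. f (cis t)"])
          (auto simp: Rats_closure_real intro!: cSUP_upper bdd_rat
            continuous_on_compose2[OF f] continuous_intros)
      ultimately show "f w \<le> (SUP q\<in>\<rat>. f (cis q))" by simp
    qed (auto intro!: exI[of _ 1])
    show "(SUP q\<in>\<rat>. f (cis q)) \<le> (SUP w\<in>{w. cmod w = 1}. f w)"
      by (rule cSUP_least) (auto intro!: cSUP_upper bdd)
  qed
qed

lemma sets_circle_points [measurable_cong]:
  "sets (circle_points N) = sets (PiM {..<N} (\<lambda>_. borel))"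
  unfolding circle_points_def unif_circle_def by (intro sets_PiM_cong) auto

lemma measurable_max_rpoly [measurable]:
  "(\<lambda>z. SUP w\<in>{w. cmod w = 1}. (cmod (rpoly N z w))\<^sup>2) \<in> borel_measurable (circle_points N)"
proof -
  have "(SUP w\<in>{w. cmod w = 1}. (cmod (rpoly N z w))\<^sup>2) = (SUP q\<in>\<rat>. (cmod (rpoly N z (cis q)))\<^sup>2)"
    for z by (rule SUP_circle_rational_angles) (auto simp: rpoly_def intro!: continuous_intros)
  moreover have "(\<lambda>z. SUP q\<in>\<rat>. (cmod (rpoly N z (cis q)))\<^sup>2) \<in> borel_measurable (circle_points N)"
  proof (rule borel_measurable_cSUP)
    show "bdd_above ((\<lambda>q. (cmod (rpoly N z (cis q)))\<^sup>2) ` \<rat>)" for z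
      by (rule bdd_above_mono[OF bdd_rpoly]) auto
  qed (auto simp: rpoly_def countable_rat)
  ultimately show ?thesis by simp
qed

lemma sets_unif_circle [measurable_cong]: "sets unif_circle = sets borel"
  by (simp add: unif_circle_def)

lemma borel_measurable_cis [measurable]: "cis \<in> borel_measurable borel"
  by (intro borel_measurable_continuous_onI continuous_intros)

lemma prob_space_unif_circle: "prob_space unif_circle"
  unfolding unif_circle_def
  by (intro prob_space.prob_space_distr prob_space_uniform_measure) (auto intro: continuous_intros)

lemma AE_unif_circle_unit: "AE z in unif_circle. cmod z = 1"
  unfolding unif_circle_def by (subst AE_distr_iff) (auto intro: continuous_intros)

lemma uniform_angle_density:
  "uniform_measure lborel {0..<2*pi} = density lborel (\<lambda>t. ennreal (indicator {0..2*pi} t / (2*pi)))"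
  unfolding uniform_measure_def
proof (rule density_cong)
  show "AE t in lborel. indicator {0..<2*pi} t / emeasure lborel {0..<2*pi}
          = ennreal (indicator {0..2*pi} t / (2*pi))"
    using AE_lborel_singleton[of "2*pi"]
  proof eventually_elim
    case (elim t)
    have "emeasure lborel {0..<2*pi} = ennreal (2*pi)" by simp
    then show ?case using elim
      by (auto simp: indicator_def divide_ennreal[symmetric] ennreal_indicator[symmetric])
  qed
qed auto

lemma integral_uniform_angle:
  fixes g :: "real \<Rightarrow> real"
  assumes g: "continuous_on UNIV g" and I: "(g has_integral I) {0..2*pi}"
  shows "integral\<^sup>L (uniform_measure lborel {0..<2*pi}) g = I / (2*pi)"
proof -
  have [measurable]: "g \<in> borel_measurable borel" using g by (rule borel_measurable_continuous_onI)
  have "integral\<^sup>L (uniform_measure lborel {0..<2*pi}) g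
          = integral\<^sup>L lborel (\<lambda>t. (indicator {0..2*pi} t / (2*pi)) *\<^sub>R g t)"
    unfolding uniform_angle_density by (rule integral_density) auto
  also have "(\<lambda>t. (indicator {0..2*pi} t / (2*pi)) *\<^sub>R g t) = (\<lambda>t. (indicator {0..2*pi} t *\<^sub>R g t) / (2*pi))"
    by (auto simp: indicator_def)
  also have "integral\<^sup>L lborel \<dots> = integral\<^sup>L lborel (\<lambda>t. indicator {0..2*pi} t *\<^sub>R g t) / (2*pi)"
    by (rule integral_divide_zero)
  also have "integral\<^sup>L lborel (\<lambda>t. indicator {0..2*pi} t *\<^sub>R g t) = I"
  proof -
    have int: "integrable lborel (\<lambda>t. indicator {0..2*pi} t *\<^sub>R g t)"
      by (rule borel_integrable_compact) (auto intro: continuous_on_subset[OF g])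
    have "(\<lambda>t. indicator {0..2*pi} t *\<^sub>R g t) = (\<lambda>t. if t \<in> {0..2*pi} then g t else 0)"
      by (auto simp: indicator_def)
    then have "((\<lambda>t. indicator {0..2*pi} t *\<^sub>R g t) has_integral I) UNIV"
      using I has_integral_restrict_UNIV[of "{0..2*pi}" g I] by simp
    then show ?thesis using has_integral_integral_lborel[OF int] by (metis has_integral_unique)
  qed
  finally show ?thesis .
qed

lemma integral_unif_circle:
  fixes h :: "complex \<Rightarrow> real"
  assumes h: "continuous_on UNIV h" and I: "((\<lambda>t. h (cis t)) has_integral I) {0..2*pi}"
  shows "integral\<^sup>L unif_circle h = I / (2*pi)"
proof -
  have [measurable]: "h \<in> borel_measurable borel" using h by (rule borel_measurable_continuous_onI)
  have "integral\<^sup>L unif_circle h = integral\<^sup>L (uniform_measure lborel {0..<2*pi}) (\<lambda>t. h (cis t))"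
    unfolding unif_circle_def by (subst integral_distr) auto
  also have "\<dots> = I / (2*pi)"
    by (rule integral_uniform_angle[OF _ I])
      (intro continuous_on_compose2[OF h] continuous_intros, auto)
  finally show ?thesis .
qed

lemma has_integral_cos_period: "(cos has_integral 0) {0..2*pi}"
proof -
  have "(cos has_integral (sin (2*pi) - sin 0)) {0..2*pi}"
    by (intro fundamental_theorem_of_calculus)
      (auto intro!: derivative_eq_intros simp flip: has_real_derivative_iff_has_vector_derivative)
  then show ?thesis by simp
qed

lemma has_integral_cos_squared_period: "((\<lambda>t. (cos t)\<^sup>2) has_integral pi) {0..2*pi}"
proof -
  have "((\<lambda>t. (cos t)\<^sup>2) has_integral ((2*pi/2 + sin (2*(2*pi))/4) - (0/2 + sin (2*0)/4))) {0..2*pi}"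
  proof (rule fundamental_theorem_of_calculus)
    fix x :: real
    have "((\<lambda>t. t/2 + sin (2*t)/4) has_real_derivative (1/2 + cos (2*x) * 2 / 4)) (at x within {0..2*pi})"
      by (auto intro!: derivative_eq_intros)
    moreover have "1/2 + cos (2*x) * 2 / 4 = (cos x)\<^sup>2" using cos_double_cos[of x] by (simp add: field_simps)
    ultimately show "((\<lambda>t. t/2 + sin (2*t)/4) has_vector_derivative (cos x)\<^sup>2) (at x within {0..2*pi})"
      by (simp add: has_real_derivative_iff_has_vector_derivative)
  qed simp
  moreover have "sin (2*(2*pi)) = 0"
    using sin_npi[of 4] by (simp only: mult.assoc[symmetric]) simp
  ultimately show ?thesis by simp
qed

lemma unif_circle_Re_moments:
  "integral\<^sup>L unif_circle Re = 0" "integral\<^sup>L unif_circle (\<lambda>z. (Re z)\<^sup>2) = 1/2"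
  "integrable unif_circle (\<lambda>z. (Re z)\<^sup>2)"
proof -
  have "((\<lambda>t. Re (cis t)) has_integral 0) {0..2*pi}"
    using has_integral_cos_period by simp
  then show "integral\<^sup>L unif_circle Re = 0"
    using integral_unif_circle[of Re 0] continuous_on_Re[OF continuous_on_id] by simp
  have "((\<lambda>t. (Re (cis t))\<^sup>2) has_integral pi) {0..2*pi}"
    using has_integral_cos_squared_period by simp
  then show "integral\<^sup>L unif_circle (\<lambda>z. (Re z)\<^sup>2) = 1/2"
    using integral_unif_circle[of "\<lambda>z. (Re z)\<^sup>2" pi]
      continuous_on_power[OF continuous_on_Re[OF continuous_on_id]] by simp
  interpret prob_space unif_circle by (rule prob_space_unif_circle)
  show "integrable unif_circle (\<lambda>z. (Re z)\<^sup>2)"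
  proof (rule integrable_const_bound[where B=1])
    show "AE z in unif_circle. norm ((Re z)\<^sup>2) \<le> 1"
      using AE_unif_circle_unit
    proof eventually_elim
      case (elim z)
      then show ?case using abs_Re_le_cmod[of z] by (simp add: abs_square_le_1)
    qed
  qed measurable
qed

text \<open>An infinite i.i.d. sequence of uniform points; its first n coordinates have the law
  \<open>circle_points n\<close>, and it is the natural setting for the central limit theorem.\<close>
abbreviation circle_seq :: "(nat \<Rightarrow> complex) measure" where
  "circle_seq \<equiv> PiM UNIV (\<lambda>_::nat. unif_circle)"

lemma prob_space_circle_seq: "prob_space circle_seq"
  by (intro prob_space_PiM prob_space_unif_circle)

lemma distr_circle_seq_component: "distr circle_seq unif_circle (\<lambda>\<omega>. \<omega> i) = unif_circle"
  by (rule distr_PiM_component) (auto intro: prob_space_unif_circle)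

lemma integral_circle_seq_component:
  fixes f :: "complex \<Rightarrow> real"
  assumes [measurable]: "f \<in> borel_measurable borel"
  shows "integral\<^sup>L circle_seq (\<lambda>\<omega>. f (\<omega> i)) = integral\<^sup>L unif_circle f"
proof -
  have "integral\<^sup>L circle_seq (\<lambda>\<omega>. f (\<omega> i)) = integral\<^sup>L (distr circle_seq unif_circle (\<lambda>\<omega>. \<omega> i)) f"
    by (subst integral_distr) auto
  then show ?thesis by (simp only: distr_circle_seq_component)
qed

lemma indep_Re_circle_seq: "prob_space.indep_vars circle_seq (\<lambda>_. borel) (\<lambda>i \<omega>. Re (\<omega> i)) UNIV"
proof -
  interpret prob_space circle_seq by (rule prob_space_circle_seq)
  have "indep_vars (\<lambda>_. unif_circle) (\<lambda>i \<omega>. \<omega> i) UNIV"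
    by (subst indep_vars_iff_distr_eq_PiM) (auto simp: distr_circle_seq_component restrict_def)
  then show ?thesis by (rule indep_vars_compose2) auto
qed

lemma clt_Re_sum:
  "weak_conv_m (\<lambda>n. distr circle_seq borel (\<lambda>\<omega>. (\<Sum>i<n. Re (\<omega> i)) / sqrt (real n * (sqrt (1/2))\<^sup>2)))
     std_normal_distribution"
proof -
  interpret prob_space circle_seq by (rule prob_space_circle_seq)
  show ?thesis
  proof (rule central_limit_theorem_zero_mean[where \<mu> = "distr unif_circle borel Re"])
    show "indep_vars (\<lambda>i. borel) (\<lambda>i \<omega>. Re (\<omega> i)) UNIV" by (rule indep_Re_circle_seq)
    show "expectation (\<lambda>\<omega>. Re (\<omega> n)) = 0" for n
      by (simp add: integral_circle_seq_component unif_circle_Re_moments)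
    show "integrable circle_seq (\<lambda>\<omega>. (Re (\<omega> n))\<^sup>2)" for n
    proof -
      have "integrable (distr circle_seq unif_circle (\<lambda>\<omega>. \<omega> n)) (\<lambda>z. (Re z)\<^sup>2)"
        by (simp add: distr_circle_seq_component unif_circle_Re_moments)
      then show ?thesis by (subst (asm) integrable_distr_eq) auto
    qed
    show "variance (\<lambda>\<omega>. Re (\<omega> n)) = (sqrt (1/2))\<^sup>2" for n
      using integral_circle_seq_component[of "\<lambda>z. (Re z)\<^sup>2" n] integral_circle_seq_component[of Re n]
      by (simp add: unif_circle_Re_moments)
    show "distr circle_seq borel (\<lambda>\<omega>. Re (\<omega> n)) = distr unif_circle borel Re" for n
      by (subst (2) distr_circle_seq_component[symmetric, of n]) (simp add: distr_distr comp_def)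
  qed simp
qed

text \<open>The standard normal density is at most \<open>1/sqrt(2\<pi>)\<close>, so it gives a set at most
  \<open>1/sqrt(2\<pi>)\<close> times its Lebesgue measure.\<close>
lemma std_normal_measure_le:
  assumes [measurable]: "A \<in> sets borel" and L: "emeasure lborel A = ennreal L" "0 \<le> L"
  shows "measure std_normal_distribution A \<le> L / sqrt (2*pi)"
proof -
  have "emeasure std_normal_distribution A = (\<integral>\<^sup>+x. ennreal (std_normal_density x) * indicator A x \<partial>lborel)"
    by (subst emeasure_density) auto
  also have "\<dots> \<le> (\<integral>\<^sup>+x. ennreal (1 / sqrt (2*pi)) * indicator A x \<partial>lborel)"
    by (intro nn_integral_mono mult_right_mono ennreal_leI)
      (auto simp: std_normal_density_def intro!: divide_right_mono)
  also have "\<dots> = ennreal (1 / sqrt (2*pi)) * emeasure lborel A"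
    by (rule nn_integral_cmult_indicator) simp
  also have "\<dots> = ennreal (L / sqrt (2*pi))" using L by (simp add: ennreal_mult[symmetric])
  finally show ?thesis using L by (simp add: measure_def enn2real_leI)
qed

text \<open>In particular the normal distribution has no atoms (so its cdf is continuous, as weak
  convergence requires) and gives an interval \<open>(-a, a]\<close> mass at most \<open>2a/sqrt(2\<pi>)\<close>.\<close>
lemma isCont_std_normal_cdf: "isCont (cdf std_normal_distribution) x"
proof -
  interpret real_distribution std_normal_distribution by (rule real_dist_normal_dist)
  have "measure std_normal_distribution {x} \<le> 0 / sqrt (2*pi)"
    by (rule std_normal_measure_le) auto
  then show ?thesis by (simp add: isCont_cdf measure_nonneg antisym)
qed

lemma std_normal_interval:
  assumes "0 \<le> a"
  shows "cdf std_normal_distribution a - cdf std_normal_distribution (-a) \<le> 2 * a / sqrt (2*pi)"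
proof -
  interpret real_distribution std_normal_distribution by (rule real_dist_normal_dist)
  have "cdf std_normal_distribution a - cdf std_normal_distribution (-a)
          = measure std_normal_distribution ({..a} - {..-a})"
    using assms by (simp add: cdf_def finite_measure_Diff subset_eq)
  also have "{..a} - {..-a} = {-a<..a}" by auto
  also have "measure std_normal_distribution {-a<..a} \<le> (2*a) / sqrt (2*pi)"
    by (rule std_normal_measure_le) (use assms in auto)
  finally show ?thesis by simp
qed

text \<open>Anti-concentration: \<open>P(|\<Sum>\<^sub>i<n Re z\<^sub>i| < c sqrt n)\<close> tends to at most \<open>2c/sqrt \<pi>\<close>,
  the Gaussian mass of \<open>[-c sqrt 2, c sqrt 2]\<close>.\<close>
lemma Re_sum_anticoncentration_seq:
  assumes c: "c > 0" and ce: "2 * c / sqrt pi < \<epsilon>"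
  shows "\<forall>\<^sub>F n in sequentially.
           measure circle_seq {\<omega> \<in> space circle_seq. \<bar>\<Sum>i<n. Re (\<omega> i)\<bar> < c * sqrt (real n)} < \<epsilon>"
proof -
  interpret prob_space circle_seq by (rule prob_space_circle_seq)
  define T where "T n \<omega> = (\<Sum>i<n. Re (\<omega> i)) / sqrt (real n * (sqrt (1/2))\<^sup>2)" for n \<omega>
  define D where "D n = distr circle_seq borel (T n)" for n
  define a where "a = c * sqrt 2"
  have a: "a \<ge> 0" using c by (simp add: a_def)
  have [measurable]: "T n \<in> borel_measurable circle_seq" for n unfolding T_def by measurable
  have cdfD: "cdf (D n) x = measure circle_seq {\<omega> \<in> space circle_seq. T n \<omega> \<le> x}" for n x
    unfolding cdf_def D_def by (subst measure_distr) (auto intro!: arg_cong[where f="measure circle_seq"])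
  have "(\<lambda>n. cdf (D n) x) \<longlonglongrightarrow> cdf std_normal_distribution x" for x
    using clt_Re_sum isCont_std_normal_cdf
    unfolding weak_conv_m_def weak_conv_def D_def T_def by blast
  then have "(\<lambda>n. cdf (D n) a - cdf (D n) (-a))
               \<longlonglongrightarrow> cdf std_normal_distribution a - cdf std_normal_distribution (-a)"
    by (intro tendsto_diff)
  moreover have "cdf std_normal_distribution a - cdf std_normal_distribution (-a) < \<epsilon>"
    using std_normal_interval[OF a] ce by (simp add: a_def real_sqrt_mult)
  ultimately have "\<forall>\<^sub>F n in sequentially. cdf (D n) a - cdf (D n) (-a) < \<epsilon>"
    by (rule order_tendstoD)
  then show ?thesis
    using eventually_gt_at_top[of 0]
  proof eventually_elim
    case (elim n)
    let ?A = "{\<omega> \<in> space circle_seq. T n \<omega> \<le> a}" and ?B = "{\<omega> \<in> space circle_seq. T n \<omega> \<le> -a}"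
    have "{\<omega> \<in> space circle_seq. \<bar>\<Sum>i<n. Re (\<omega> i)\<bar> < c * sqrt (real n)} \<subseteq> ?A - ?B"
    proof safe
      fix \<omega> assume "\<bar>\<Sum>i<n. Re (\<omega> i)\<bar> < c * sqrt (real n)"
      moreover have "sqrt (real n * (sqrt (1/2))\<^sup>2) = sqrt (real n) / sqrt 2"
        by (simp add: real_sqrt_mult real_sqrt_divide)
      ultimately have "\<bar>T n \<omega>\<bar> < a"
        using elim by (simp add: T_def a_def abs_divide divide_less_eq field_simps)
      then show "T n \<omega> \<le> a" "T n \<omega> \<le> - a \<Longrightarrow> False" by auto
    qed
    then have "measure circle_seq {\<omega> \<in> space circle_seq. \<bar>\<Sum>i<n. Re (\<omega> i)\<bar> < c * sqrt (real n)}
                 \<le> measure circle_seq (?A - ?B)"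
      by (intro finite_measure_mono) measurable
    also have "\<dots> = cdf (D n) a - cdf (D n) (-a)"
      using a by (subst finite_measure_Diff) (auto simp: cdfD, measurable)
    finally show ?case using elim by linarith
  qed
qed

lemma measure_circle_points_as_seq:
  assumes "A \<in> sets (circle_points n)"
  shows "measure (circle_points n) A
           = measure circle_seq {\<omega> \<in> space circle_seq. restrict \<omega> {..<n} \<in> A}"
proof -
  have R: "(\<lambda>\<omega>. restrict \<omega> {..<n}) \<in> measurable circle_seq (circle_points n)"
    unfolding circle_points_def by (rule measurable_restrict_subset) auto
  have "circle_points n = distr circle_seq (circle_points n) (\<lambda>\<omega>. restrict \<omega> {..<n})"
    unfolding circle_points_def
    by (rule product_prob_space.distr_PiM_restrict_finite[symmetric])
      (auto intro: product_prob_spaceI prob_space_unif_circle)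
  then have "measure (circle_points n) A
               = measure circle_seq ((\<lambda>\<omega>. restrict \<omega> {..<n}) -` A \<inter> space circle_seq)"
    using measure_distr[OF R assms] by simp
  then show ?thesis by (simp add: vimage_def Collect_conj_eq Int_commute)
qed

lemma Re_sum_anticoncentration:
  assumes "c > 0" and "2 * c / sqrt pi < \<epsilon>"
  shows "\<forall>\<^sub>F n in sequentially. measure (circle_points n)
           {z \<in> space (circle_points n). \<bar>\<Sum>i<n. Re (z i)\<bar> < c * sqrt (real n)} < \<epsilon>"
  using Re_sum_anticoncentration_seq[OF assms]
proof eventually_elim
  case (elim n)
  let ?A = "{z \<in> space (circle_points n). \<bar>\<Sum>i<n. Re (z i)\<bar> < c * sqrt (real n)}"
  have "?A \<in> sets (circle_points n)" by measurable
  then have "measure (circle_points n) ?A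
               = measure circle_seq {\<omega> \<in> space circle_seq. restrict \<omega> {..<n} \<in> ?A}"
    by (rule measure_circle_points_as_seq)
  also have "{\<omega> \<in> space circle_seq. restrict \<omega> {..<n} \<in> ?A}
      = {\<omega> \<in> space circle_seq. \<bar>\<Sum>i<n. Re (\<omega> i)\<bar> < c * sqrt (real n)}"
    by (auto simp: space_PiM circle_points_def PiE_def Pi_def)
  finally show ?case using elim by simp
qed

lemma max_rpoly_event_prob:
  assumes u: "0 \<le> u" "u < 1" and t: "t \<le> exp (u\<^sup>2 * x - 2)"
  shows "1 - measure (circle_points n) {z \<in> space (circle_points n). \<bar>\<Sum>i<n. Re (z i)\<bar> < x}
     \<le> measure (circle_points n)
          {z \<in> space (circle_points n). t \<le> (SUP w\<in>{w. cmod w = 1}. (cmod (rpoly n z w))\<^sup>2)}"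
proof -
  interpret prob_space "circle_points n"
    unfolding circle_points_def by (intro prob_space_PiM prob_space_unif_circle)
  let ?B = "{z \<in> space (circle_points n). \<bar>\<Sum>i<n. Re (z i)\<bar> < x}"
  have unit: "AE z in circle_points n. \<forall>i\<in>{..<n}. cmod (z i) = 1"
    unfolding circle_points_def
    by (intro AE_finite_allI AE_PiM_component prob_space_unif_circle AE_unif_circle_unit) auto
  have "measure (circle_points n) (space (circle_points n) - ?B)
     \<le> measure (circle_points n)
          {z \<in> space (circle_points n). t \<le> (SUP w\<in>{w. cmod w = 1}. (cmod (rpoly n z w))\<^sup>2)}"
  proof (rule finite_measure_mono_AE)
    show "AE z in circle_points n. z \<in> space (circle_points n) - ?B \<longrightarrow>
            z \<in> {z \<in> space (circle_points n). t \<le> (SUP w\<in>{w. cmod w = 1}. (cmod (rpoly n z w))\<^sup>2)}"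
      using unit
    proof eventually_elim
      case (elim z)
      show ?case
      proof
        assume z: "z \<in> space (circle_points n) - ?B"
        have "t \<le> exp (u\<^sup>2 * x - 2)" by (rule t)
        also have "\<dots> \<le> exp (u\<^sup>2 * \<bar>\<Sum>i<n. Re (z i)\<bar> - 2)"
          using z by (auto intro!: mult_left_mono)
        also have "\<dots> \<le> (SUP w\<in>{w. cmod w = 1}. (cmod (rpoly n z w))\<^sup>2)"
          using elim u by (intro max_lower_bound) auto
        finally show "z \<in> {z \<in> space (circle_points n). t \<le> (SUP w\<in>{w. cmod w = 1}. (cmod (rpoly n z w))\<^sup>2)}"
          using z by simp
      qed
    qed
  qed measurable
  then show ?thesis by (simp add: prob_compl)
qed

lemma gamma_const_le: "gamma_const \<le> 9/10"
proof -
  define x where "x = pi/8"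
  have x: "0 < x" "x < pi/2" by (auto simp: x_def)
  have s: "sin x > 0" using x by (intro sin_gt_zero) auto
  have c: "cos x > 0" using x by (intro cos_gt_zero) auto
  have "cos x / sin x = (2 * (cos x)\<^sup>2) / (2 * sin x * cos x)"
    using s c by (simp add: power2_eq_square field_simps)
  also have "\<dots> = (1 + cos (2*x)) / sin (2*x)"
    by (simp add: sin_double cos_double_cos)
  also have "\<dots> = 1 + sqrt 2" by (simp add: x_def sin_45 cos_45 field_simps)
  finally have eq: "cos (pi/8) / sin (pi/8) = 1 + sqrt 2" by (simp add: x_def)
  have "sqrt 2 \<le> 14143/10000"
    by (rule real_le_lsqrt) (auto simp: power2_eq_square)
  then have "1 + sqrt 2 \<le> (1 + 3/10 + (3/10)\<^sup>2/2) ^ 3" by (simp add: power_def)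
  also have "\<dots> \<le> exp (3/10) ^ 3"
    by (intro power_mono exp_lower_Taylor_quadratic) auto
  also have "\<dots> = exp (9/10)" by (simp add: exp_of_nat_mult[symmetric])
  finally have "ln (1 + sqrt 2) \<le> 9/10"
    using ln_le_cancel_iff[of "1 + sqrt 2" "exp (9/10)"] by (simp add: add_pos_nonneg)
  then show ?thesis by (simp add: gamma_const_def eq)
qed

lemma eventually_sqrt_gap:
  fixes a b K :: real
  assumes "b < a"
  shows "\<forall>\<^sub>F N in sequentially. b * sqrt (real N) \<le> a * sqrt (real N) - K"
proof -
  have "filterlim (\<lambda>N. sqrt (real N)) at_top sequentially"
    by (rule filterlim_compose[OF sqrt_at_top filterlim_real_sequentially])
  then have "\<forall>\<^sub>F N in sequentially. K / (a - b) \<le> sqrt (real N)"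
    by (simp add: filterlim_at_top)
  then show ?thesis
    by eventually_elim (use assms in \<open>simp add: field_simps\<close>)
qed

theorem mainTheorem15:
  fixes \<epsilon> :: real
  assumes "0 < \<epsilon>" and "\<epsilon> < 1"
  shows "\<forall>\<^sub>F N in sequentially.
     measure (circle_points N)
       {z \<in> space (circle_points N).
          (SUP w\<in>{w::complex. cmod w = 1}. (cmod (rpoly N z w))\<^sup>2)
            \<ge> exp (gamma_const * sqrt pi * \<epsilon> * sqrt (real N) / 2)}
     \<ge> 1 - \<epsilon>"
proof -
  txt \<open>With \<open>\<gamma> \<le> 9/10 < 0.99\<^sup>2 \<cdot> 0.95\<close> the deterministic bound beats the threshold as soon as
    \<open>|S| \<ge> c sqrt N\<close>, an event of probability \<open>> 1 - \<epsilon>\<close> by anti-concentration.\<close>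
  define u :: real where "u = 99/100"
  define c where "c = (95/100) * (\<epsilon> * sqrt pi / 2)"
  have gap: "gamma_const * (\<epsilon> * sqrt pi / 2) < u\<^sup>2 * c"
    using gamma_const_le assms by (simp add: u_def c_def power2_eq_square)
  have "\<forall>\<^sub>F N in sequentially. measure (circle_points N)
          {z \<in> space (circle_points N). \<bar>\<Sum>i<N. Re (z i)\<bar> < c * sqrt (real N)} < \<epsilon>"
    using assms by (intro Re_sum_anticoncentration) (auto simp: c_def)
  with eventually_sqrt_gap[OF gap, where K = 2] show ?thesis
  proof eventually_elim
    case (elim N)
    have thr: "exp (gamma_const * sqrt pi * \<epsilon> * sqrt (real N) / 2) \<le> exp (u\<^sup>2 * (c * sqrt (real N)) - 2)"
      using elim(1) by (simp add: algebra_simps)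
    have "1 - measure (circle_points N)
                 {z \<in> space (circle_points N). \<bar>\<Sum>i<N. Re (z i)\<bar> < c * sqrt (real N)}
               \<le> measure (circle_points N) {z \<in> space (circle_points N).
                   exp (gamma_const * sqrt pi * \<epsilon> * sqrt (real N) / 2)
                     \<le> (SUP w\<in>{w. cmod w = 1}. (cmod (rpoly N z w))\<^sup>2)}"
      by (rule max_rpoly_event_prob[where u = u, OF _ _ thr]) (simp_all add: u_def)
    then show ?case using elim(2) by linarith
  qed
qed

end
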